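(* Let ${\bf r}=(r_0,r_1,\dots)$ be a finitely supported sequence of nonnegative integers with $n=\sum_{d\ge1}r_d$, and let $k\ge0$ be an integer. For any two ${\bf S}^{(1)},{\bf S}^{(2)}\in V_{\bf r}$, $$|\mathcal{CF}_{{\bf r},k,{\bf S}^{(1)}}|=|\mathcal{CF}_{{\bf r},k,{\bf S}^{(2)}}|.$$
   Context: A plane tree is an unlabelled rooted tree in which the children of every vertex are linearly ordered; a plane forest is a finite linearly ordered sequence of plane trees. For vertices $u,v$ in a tree, $v$ is a descendant of $u$ if $u$ lies on the path from the root to $v$ (so $u$ is a descendant of itself). The degree $d_v$ is the number of children of $v$; $v$ is internal if $d_v\ge1$. $I(F)$ is the set of internal vertices of $F$. A plane forest has type ${\bf r}$ if it has exactly $r_i$ vertices of degree $i$ for all $i\ge0$. A labelled forest is a plane forest $F$ together with a bijection (labelling) $I(F)\to[n]$. An internal vertex $v$ of a labelled forest is proper if no internal descendant of $v$ has a smaller label than $v$, and improper otherwise. Fix colors $c_1,c_2,\dots$ and distinct special colors $c_1',c_2',\dots$. A proper $k$-coloring of a labelled forest assigns to each internal vertex $v$ a color, taken from $\{c_1,\dots,c_{d_v}\}$ if $v$ is proper and from $\{c_1,\dots,c_{d_v}\}\cup\{c_1',\dots,c_k'\}$ if $v$ is improper. A $k$-colored labelled forest is a labelled forest together with a proper $k$-coloring; $\mathcal{CF}_{{\bf r},k}$ is the set of $k$-colored labelled forests whose underlying plane forest has type ${\bf r}$. $V_{\bf r}$ is the set of sequences ${\bf S}=(S_1,S_2,\dots)$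 of pairwise disjoint subsets of $[n]$ with union $[n]$ and $|S_i|=r_i$ for all $i\ge1$. For ${\bf S}\in V_{\bf r}$, $\mathcal{CF}_{{\bf r},k,{\bf S}}$ is the set of forests in $\mathcal{CF}_{{\bf r},k}$ in which every internal vertex $v$ has its label in $S_{d_v}$. *)

theory Defs
  imports Main
begin

text \<open>Colors: Col i stands for c_i, SCol j for the special color c'_j.\<close>
datatype color = Col nat | SCol nat

datatype ctree = Leaf | Inner nat color "ctree list"

fun labels :: "ctree \<Rightarrow> nat list" where
  "labels Leaf = []"
| "labels (Inner l c ts) = l # concat (map labels ts)"

fun degcount :: "nat \<Rightarrow> ctree \<Rightarrow> nat" where
  "degcount i Leaf = (if i = 0 then 1 else 0)"
| "degcount i (Inner l c ts) = (if length ts = i then 1 else 0) + sum_list (map (degcount i) ts)"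

definition proper_root :: "nat \<Rightarrow> ctree list \<Rightarrow> bool" where
  "proper_root l ts = (\<forall>m \<in> set (labels (Inner l (Col 0) ts)). \<not> m < l)"

fun wf_col :: "nat \<Rightarrow> ctree \<Rightarrow> bool" where
  "wf_col k Leaf = True"
| "wf_col k (Inner l c ts) =
     (ts \<noteq> [] \<and>
      (c \<in> {Col i | i. 1 \<le> i \<and> i \<le> length ts} \<or>
       (\<not> proper_root l ts \<and> c \<in> {SCol j | j. 1 \<le> j \<and> j \<le> k})) \<and>
      (\<forall>t \<in> set ts. wf_col k t))"

fun labels_in :: "(nat \<Rightarrow> nat set) \<Rightarrow> ctree \<Rightarrow> bool" where
  "labels_in S Leaf = True"
| "labels_in S (Inner l c ts) = (l \<in> S (length ts) \<and> (\<forall>t \<in> set ts. labels_in S t))"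

definition forest_labels :: "ctree list \<Rightarrow> nat list" where
  "forest_labels F = concat (map labels F)"

definition n_of :: "(nat \<Rightarrow> nat) \<Rightarrow> nat" where
  "n_of r = (\<Sum>d \<in> {d. 1 \<le> d \<and> r d \<noteq> 0}. r d)"

definition CF :: "(nat \<Rightarrow> nat) \<Rightarrow> nat \<Rightarrow> ctree list set" where
  "CF r k = {F. (\<forall>t \<in> set F. wf_col k t) \<and>
                distinct (forest_labels F) \<and> set (forest_labels F) = {1..n_of r} \<and>
                (\<forall>i. sum_list (map (degcount i) F) = r i)}"

text \<open>V_r: sequences (S_1, S_2, ...) (index 0 unused) of pairwise disjoint subsets of [n]
  with union [n] and |S_i| = r_i for i \<ge> 1.\<close>
definition V :: "(nat \<Rightarrow> nat) \<Rightarrow> (nat \<Rightarrow> nat set) set" where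
  "V r = {S. (\<forall>i\<ge>1. S i \<subseteq> {1..n_of r} \<and> card (S i) = r i) \<and>
             (\<forall>i\<ge>1. \<forall>j\<ge>1. i \<noteq> j \<longrightarrow> S i \<inter> S j = {}) \<and>
             (\<Union>i\<in>{i. 1 \<le> i}. S i) = {1..n_of r}}"

definition CF_S :: "(nat \<Rightarrow> nat) \<Rightarrow> nat \<Rightarrow> (nat \<Rightarrow> nat set) \<Rightarrow> ctree list set" where
  "CF_S r k S = {F \<in> CF r k. \<forall>t \<in> set F. labels_in S t}"

end

(*
  Adjacent transpositions (i i+1) generate the permutations of [n], and any two elements of V_r
  differ by a permutation of [n]; so it suffices to compare S with (i i+1) S. Swapping the labels
  i and i+1 preserves all degrees, and it can make an improper vertex proper only if the vertex
  is critical: labelled i+1, specially colored, with minimum label i in its subtree. At a critical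
  vertex we exchange it with its descendant labelled i instead (see exchange). Both maps are
  involutions acting on the multiset of (label, degree) pairs by the transposition, so together
  they are a bijection between the colored forests for S and for (i i+1) S.
*)
theory Submission
  imports Defs "HOL-Library.Multiset" "HOL-Combinatorics.Permutations"
begin

section \<open>Labels and degrees\<close>

abbreviation adj_swap :: "nat \<Rightarrow> nat \<Rightarrow> nat" where
  "adj_swap i \<equiv> Transposition.transpose i (Suc i)"

fun nodes :: "ctree \<Rightarrow> (nat \<times> nat) multiset" where
  "nodes Leaf = {#}"
| "nodes (Inner l c ts) = add_mset (l, length ts) (\<Sum>t\<leftarrow>ts. nodes t)"

fun nleaves :: "ctree \<Rightarrow> nat" where
  "nleaves Leaf = 1"
| "nleaves (Inner l c ts) = (\<Sum>t\<leftarrow>ts. nleaves t)"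

fun map_label :: "(nat \<Rightarrow> nat) \<Rightarrow> ctree \<Rightarrow> ctree" where
  "map_label f Leaf = Leaf"
| "map_label f (Inner l c ts) = Inner (f l) c (map (map_label f) ts)"

lemma image_mset_sum_list: "image_mset f (\<Sum>x\<leftarrow>xs. g x) = (\<Sum>x\<leftarrow>xs. image_mset f (g x))"
  by (induction xs) auto

lemma image_mset_apfst_id: "\<forall>(x, _) \<in># X. f x = x \<Longrightarrow> image_mset (apfst f) X = X"
  by (induction X) auto

lemma image_mset_apfst_transpose:
  assumes "\<forall>(x, _) \<in># X. x \<noteq> a \<and> x \<noteq> b"
  shows "image_mset (apfst (Transposition.transpose a b)) (add_mset (a, m) (add_mset (b, n) X))
    = add_mset (b, m) (add_mset (a, n) X)"
proof -
  have "image_mset (apfst (Transposition.transpose a b)) X = X"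
    using assms by (intro image_mset_apfst_id) auto
  then show ?thesis
    by simp
qed

lemma sum_list_map_update:
  "n < length xs \<Longrightarrow> (\<Sum>x\<leftarrow>xs[n := y]. f x) + f (xs ! n) = (\<Sum>x\<leftarrow>xs. f x) + (f y :: 'b::comm_monoid_add)"
  by (induction xs arbitrary: n) (auto simp: add_ac split: nat.split)

lemma proper_root_iff: "proper_root l ts \<longleftrightarrow> (\<forall>m \<in> set (labels (Inner l c ts)). \<not> m < l)"
  unfolding proper_root_def by simp

lemma mset_labels: "mset (labels t) = image_mset fst (nodes t)"
  by (induction t) (auto simp: mset_concat image_mset_sum_list comp_def intro!: arg_cong[where f = sum_list])

lemma set_labels: "set (labels t) = fst ` set_mset (nodes t)"
  by (metis mset_labels set_image_mset set_mset_mset)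

lemma label_unique_in_nodes:
  assumes "distinct (labels t)" and "nodes t = add_mset (a, d) X"
  shows "\<forall>(x, _) \<in># X. x \<noteq> a"
proof -
  have "mset (labels t) = add_mset a (image_mset fst X)"
    using assms(2) by (simp add: mset_labels)
  moreover have "count (mset (labels t)) a \<le> 1"
    using assms(1) by (simp add: distinct_count_atmost_1)
  ultimately have "count (image_mset fst X) a = 0"
    by simp
  then show ?thesis
    by (force simp: count_eq_zero_iff)
qed

lemma labels_in_iff_nodes: "labels_in S t \<longleftrightarrow> (\<forall>(l, d) \<in># nodes t. l \<in> S d)"
  by (induction t) auto

lemma nleaves_nodes: "nleaves t + size (nodes t) = 1 + \<Sum>\<^sub># (image_mset snd (nodes t))"
proof (induction t)
  case (Inner l c ts)
  then have "\<forall>t\<in>set ts. nleaves t + size (nodes t) = 1 + \<Sum>\<^sub># (image_mset snd (nodes t))"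
    by blast
  then have "(\<Sum>t\<leftarrow>ts. nleaves t) + size (\<Sum>t\<leftarrow>ts. nodes t)
      = length ts + \<Sum>\<^sub># (image_mset snd (\<Sum>t\<leftarrow>ts. nodes t))"
    by (induction ts) auto
  then show ?case by simp
qed simp

lemma degcount_nodes:
  "degcount d t = (if d = 0 then nleaves t else 0) + count (image_mset snd (nodes t)) d"
proof (induction t)
  case (Inner l c ts)
  then have "(\<Sum>t\<leftarrow>ts. degcount d t)
      = (if d = 0 then \<Sum>t\<leftarrow>ts. nleaves t else 0) + count (image_mset snd (\<Sum>t\<leftarrow>ts. nodes t)) d"
    by (induction ts) auto
  then show ?case by simp
qed simp

text \<open>The number of leaves, hence the whole type, is determined by the degrees of the internal
  vertices.\<close>
lemma degcount_cong:
  assumes "image_mset snd (nodes t) = image_mset snd (nodes t')"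
  shows "degcount d t = degcount d t'"
proof -
  have "size (nodes t) = size (nodes t')"
    using arg_cong[OF assms, of size] by simp
  then have "nleaves t = nleaves t'"
    using nleaves_nodes[of t] nleaves_nodes[of t'] assms by simp
  then show ?thesis
    using assms by (simp add: degcount_nodes)
qed

lemma distinct_labels_child: "distinct (labels (Inner l c ts)) \<Longrightarrow> t \<in> set ts \<Longrightarrow> distinct (labels t)"
  by (auto simp: distinct_concat_iff)

lemma distinct_labels_forest: "distinct (concat (map labels ts)) \<Longrightarrow> t \<in> set ts \<Longrightarrow> distinct (labels t)"
  by (induction ts) auto

lemma labels_map_label: "labels (map_label f t) = map f (labels t)"
  by (induction t) (auto simp: map_concat comp_def intro!: arg_cong[where f = concat])

lemma labels_map_label_Inner:
  "labels (Inner (f l) c (map (map_label f) ts)) = map f (labels (Inner l c ts))"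
  using labels_map_label[of f "Inner l c ts"] by simp

lemma nodes_map_label: "nodes (map_label f t) = image_mset (apfst f) (nodes t)"
  by (induction t) (auto simp: image_mset_sum_list comp_def intro!: arg_cong[where f = sum_list])

lemma map_label_involution: "(\<And>x. f (f x) = x) \<Longrightarrow> map_label f (map_label f t) = t"
  by (induction t) (auto intro!: map_idI)

lemma nodes_adj_swap_id:
  assumes "i \<notin> set (labels t)" and "Suc i \<notin> set (labels t)"
  shows "image_mset (apfst (adj_swap i)) (nodes t) = nodes t"
proof (rule image_mset_apfst_id)
  have "x \<in> set (labels t)" if "(x, d) \<in># nodes t" for x d
    using that unfolding set_labels by force
  with assms show "\<forall>(x, _) \<in># nodes t. adj_swap i x = x"
    by (auto simp: transpose_def)
qed

section \<open>Subtrees\<close>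

fun first_inner :: "ctree list \<Rightarrow> ctree" where
  "first_inner [] = Leaf"
| "first_inner (t # ts) = (if t = Leaf then first_inner ts else t)"

fun subtree_at :: "nat \<Rightarrow> ctree \<Rightarrow> ctree" where
  "subtree_at x Leaf = Leaf"
| "subtree_at x (Inner l c ts) =
     (if l = x then Inner l c ts else first_inner (map (subtree_at x) ts))"

fun replace_at :: "nat \<Rightarrow> ctree \<Rightarrow> ctree \<Rightarrow> ctree" where
  "replace_at x s Leaf = Leaf"
| "replace_at x s (Inner l c ts) = (if l = x then s else Inner l c (map (replace_at x s) ts))"

definition child_index :: "nat \<Rightarrow> ctree list \<Rightarrow> nat" where
  "child_index x ts = length (takeWhile (\<lambda>t. x \<notin> set (labels t)) ts)"

lemma first_inner_between_Leafs:
  "\<forall>u \<in> set ys \<union> set zs. u = Leaf \<Longrightarrow> first_inner (ys @ t # zs) = t"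
proof (induction ys)
  case Nil
  then show ?case by (induction zs) auto
qed auto

lemma first_inner_Leafs: "\<forall>u \<in> set ts. u = Leaf \<Longrightarrow> first_inner ts = Leaf"
  by (induction ts) auto

lemma first_inner_in: "first_inner ts \<in> insert Leaf (set ts)"
  by (induction ts) auto

lemma subtree_at_notin: "x \<notin> set (labels t) \<Longrightarrow> subtree_at x t = Leaf"
  by (induction t) (auto intro: first_inner_Leafs)

lemma replace_at_notin: "x \<notin> set (labels t) \<Longrightarrow> replace_at x s t = t"
  by (induction t) (auto intro: map_idI)

lemma split_at_label_child:
  assumes "distinct (labels (Inner l c ts))" and "x \<in> set (labels (Inner l c ts))" and "l \<noteq> x"
  obtains ys t zs where "ts = ys @ t # zs" and "x \<in> set (labels t)"
    and "\<forall>u \<in> set ys \<union> set zs. x \<notin> set (labels u)"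
proof -
  obtain t where t: "t \<in> set ts" "x \<in> set (labels t)"
    using assms(2,3) by auto
  then obtain ys zs where ts: "ts = ys @ t # zs"
    by (meson split_list)
  have "x \<notin> set (labels u)" if "u \<in> set ys \<union> set zs" for u
    using assms(1) t(2) that unfolding ts by auto
  with ts t show thesis
    using that by blast
qed

lemma subtree_at_split:
  assumes "l \<noteq> x" and "\<forall>u \<in> set ys \<union> set zs. x \<notin> set (labels u)"
  shows "subtree_at x (Inner l c (ys @ t # zs)) = subtree_at x t"
  using assms by (auto intro!: first_inner_between_Leafs simp: subtree_at_notin)

lemma replace_at_split:
  assumes "l \<noteq> x" and "\<forall>u \<in> set ys \<union> set zs. x \<notin> set (labels u)"
  shows "replace_at x s (Inner l c (ys @ t # zs)) = Inner l c (ys @ replace_at x s t # zs)"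
  using assms by (auto intro!: map_idI simp: replace_at_notin)

lemma subtree_at_inherits:
  "set (labels (subtree_at x t)) \<subseteq> set (labels t) \<and>
   (distinct (labels t) \<longrightarrow> distinct (labels (subtree_at x t))) \<and>
   (wf_col k t \<longrightarrow> wf_col k (subtree_at x t))"
proof (induction t)
  case (Inner l c ts)
  show ?case
  proof (cases "l = x")
    case False
    have "first_inner (map (subtree_at x) ts) \<in> insert Leaf (subtree_at x ` set ts)"
      using first_inner_in[of "map (subtree_at x) ts"] by simp
    then consider "subtree_at x (Inner l c ts) = Leaf"
      | u where "u \<in> set ts" "subtree_at x (Inner l c ts) = subtree_at x u"
      using False by auto
    then show ?thesis
    proof cases
      case 2
      then show ?thesis
        using Inner.IH[of u] distinct_labels_child[of l c ts u] by auto
    qed simp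
  qed simp
qed simp

lemma subtree_at_root_label:
  assumes "distinct (labels t)" and "x \<in> set (labels t)"
  shows "\<exists>c ts. subtree_at x t = Inner x c ts"
  using assms
proof (induction t)
  case (Inner l c ts)
  show ?case
  proof (cases "l = x")
    case False
    with Inner.prems obtain ys t zs where ts: "ts = ys @ t # zs" "x \<in> set (labels t)"
      and others: "\<forall>u \<in> set ys \<union> set zs. x \<notin> set (labels u)"
      by (rule split_at_label_child)
    have "subtree_at x (Inner l c ts) = subtree_at x t"
      unfolding ts(1) using False others by (rule subtree_at_split)
    with Inner.IH[of t] ts show ?thesis
      using distinct_labels_child[OF Inner.prems(1)] by simp
  qed simp
qed simp

lemma replace_at_subtree_at: "distinct (labels t) \<Longrightarrow> replace_at x (subtree_at x t) t = t"
proof (induction t)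
  case (Inner l c ts)
  show ?case
  proof (cases "l \<noteq> x \<and> x \<in> set (labels (Inner l c ts))")
    case True
    with Inner.prems obtain ys t zs where ts: "ts = ys @ t # zs" "x \<in> set (labels t)"
      and others: "\<forall>u \<in> set ys \<union> set zs. x \<notin> set (labels u)"
      by (meson split_at_label_child)
    have "subtree_at x (Inner l c ts) = subtree_at x t"
      unfolding ts(1) using True others by (intro subtree_at_split) auto
    moreover have "replace_at x (subtree_at x t) (Inner l c ts)
        = Inner l c (ys @ replace_at x (subtree_at x t) t # zs)"
      unfolding ts(1) using True others by (intro replace_at_split) auto
    ultimately show ?thesis
      using Inner.IH[of t] ts distinct_labels_child[OF Inner.prems(1)] by simp
  qed (auto simp: replace_at_notin intro!: map_idI)
qed simp

lemma subtree_at_replace_at: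
  assumes "distinct (labels t)" and "x \<in> set (labels t)"
  shows "subtree_at x (replace_at x (Inner x c' ts') t) = Inner x c' ts'"
  using assms
proof (induction t)
  case (Inner l c ts)
  show ?case
  proof (cases "l = x")
    case False
    with Inner.prems obtain ys t zs where ts: "ts = ys @ t # zs" "x \<in> set (labels t)"
      and others: "\<forall>u \<in> set ys \<union> set zs. x \<notin> set (labels u)"
      by (rule split_at_label_child)
    let ?r = "replace_at x (Inner x c' ts') t"
    have "replace_at x (Inner x c' ts') (Inner l c ts) = Inner l c (ys @ ?r # zs)"
      unfolding ts(1) using False others by (rule replace_at_split)
    moreover have "subtree_at x (Inner l c (ys @ ?r # zs)) = subtree_at x ?r"
      using False others by (rule subtree_at_split)
    ultimately show ?thesis
      using Inner.IH[of t] ts distinct_labels_child[OF Inner.prems(1)] by simp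
  qed simp
qed simp

lemma replace_at_replace_at:
  "replace_at x s (replace_at x (Inner x c' ts') t) = replace_at x s t"
  by (induction t) auto

lemma label_in_replace_at:
  "x \<in> set (labels t) \<Longrightarrow> x \<in> set (labels s) \<Longrightarrow> x \<in> set (labels (replace_at x s t))"
  by (induction t) (auto split: if_splits)

lemma nodes_replace_at:
  assumes "distinct (labels t)" and "x \<in> set (labels t)"
  shows "nodes (replace_at x s t) + nodes (subtree_at x t) = nodes t + nodes s"
  using assms
proof (induction t)
  case (Inner l c ts)
  show ?case
  proof (cases "l = x")
    case False
    with Inner.prems obtain ys t zs where ts: "ts = ys @ t # zs" "x \<in> set (labels t)"
      and others: "\<forall>u \<in> set ys \<union> set zs. x \<notin> set (labels u)"
      by (rule split_at_label_child)
    have "replace_at x s (Inner l c ts) = Inner l c (ys @ replace_at x s t # zs)"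
      unfolding ts(1) using False others by (rule replace_at_split)
    moreover have "subtree_at x (Inner l c ts) = subtree_at x t"
      unfolding ts(1) using False others by (rule subtree_at_split)
    ultimately show ?thesis
      using Inner.IH[of t] ts distinct_labels_child[OF Inner.prems(1)] by (simp add: ac_simps)
  qed simp
qed simp

text \<open>The ancestors of \<open>x\<close> stay improper, because \<open>x\<close> remains below them.\<close>
lemma wf_col_replace_at_min:
  assumes "wf_col k t" and "wf_col k s" and "x \<in> set (labels t)" and "x \<in> set (labels s)"
    and "\<forall>m \<in> set (labels t). x \<le> m"
  shows "wf_col k (replace_at x s t)"
  using assms
proof (induction t)
  case (Inner l c ts)
  show ?case
  proof (cases "l = x")
    case False
    then have "x < l"
      using Inner.prems(5) by fastforce
    moreover have "x \<in> set (labels (replace_at x s (Inner l c ts)))"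
      using Inner.prems(3,4) by (rule label_in_replace_at)
    ultimately have "\<not> proper_root l (map (replace_at x s) ts)"
      using False unfolding proper_root_def by auto
    moreover have "wf_col k (replace_at x s u)" if "u \<in> set ts" for u
      using Inner that by (cases "x \<in> set (labels u)") (auto simp: replace_at_notin)
    ultimately show ?thesis
      using Inner.prems(1) False by auto
  qed (use Inner.prems in simp)
qed simp

lemma child_index_less:
  assumes "x \<in> set (concat (map labels ts))"
  shows "child_index x ts < length ts" and "x \<in> set (labels (ts ! child_index x ts))"
proof -
  show less: "child_index x ts < length ts"
    using assms unfolding child_index_def by (induction ts) auto
  show "x \<in> set (labels (ts ! child_index x ts))"
    using nth_length_takeWhile[OF less[unfolded child_index_def]] unfolding child_index_def by simp
qed

lemma child_index_eqI:
  assumes "n < length ts" and "x \<in> set (labels (ts ! n))" and "\<forall>m < n. x \<notin> set (labels (ts ! m))"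
  shows "child_index x ts = n"
proof -
  have "takeWhile (\<lambda>t. x \<notin> set (labels t)) ts = take n ts"
    using assms by (intro takeWhile_eq_take_P_nth) auto
  then show ?thesis
    using assms(1) unfolding child_index_def by simp
qed

section \<open>Exchange at a critical vertex\<close>

fun is_special :: "color \<Rightarrow> bool" where
  "is_special (SCol _) = True"
| "is_special (Col _) = False"

text \<open>Swapping the labels \<open>i\<close> and \<open>i + 1\<close> would make a critical vertex proper, although it
  carries a special color.\<close>
definition critical :: "nat \<Rightarrow> nat \<Rightarrow> color \<Rightarrow> ctree list \<Rightarrow> bool" where
  "critical i l c ts \<longleftrightarrow> l = Suc i \<and> is_special c \<and> i \<in> set (labels (Inner l c ts)) \<and>
     (\<forall>m \<in> set (labels (Inner l c ts)). i \<le> m)"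

fun has_critical :: "nat \<Rightarrow> ctree \<Rightarrow> bool" where
  "has_critical i Leaf = False"
| "has_critical i (Inner l c ts) = (critical i l c ts \<or> (\<exists>t \<in> set ts. has_critical i t))"

text \<open>Let the critical vertex \<open>v\<close> have children \<open>us\<close>, and let its descendant \<open>u\<close> labelled \<open>i\<close>
  lie in the \<open>q\<close>-th child \<open>T\<close> of \<open>v\<close>. Being proper, \<open>u\<close> has a color \<open>c\<^sub>j\<close>; let \<open>ls\<close> be its children.
  The exchange gives \<open>v\<close> the children \<open>ls\<close>, the \<open>j\<close>-th one replaced by \<open>T\<close> in which \<open>u\<close> is replaced
  by a vertex labelled \<open>i\<close>, colored \<open>c\<^sub>q\<close>, with the children \<open>us\<close>, the \<open>q\<close>-th one replaced by the
  \<open>j\<close>-th child of \<open>u\<close>. Doing this twice restores the tree. List indices are 0-based: \<open>q = p + 1\<close>.\<close>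
definition exchange :: "nat \<Rightarrow> nat \<Rightarrow> color \<Rightarrow> ctree list \<Rightarrow> ctree" where
  "exchange i l c us =
     (let p = child_index i us in
      case subtree_at i (us ! p) of
        Inner _ (Col j) ls \<Rightarrow>
          Inner l c (ls[j - 1 := replace_at i (Inner i (Col (Suc p)) (us[p := ls ! (j - 1)])) (us ! p)])
      | _ \<Rightarrow> Inner l c us)"

lemma exchange_unfold:
  assumes "child_index i us = p" and "subtree_at i (us ! p) = Inner i (Col j) ls"
  shows "exchange i l c us =
    Inner l c (ls[j - 1 := replace_at i (Inner i (Col (Suc p)) (us[p := ls ! (j - 1)])) (us ! p)])"
  using assms unfolding exchange_def by simp

locale critical_vertex =
  fixes k i l :: nat and c :: color and us :: "ctree list" and p j :: nat and ls :: "ctree list"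
  assumes critical_root: "critical i l c us"
    and wf_root: "wf_col k (Inner l c us)"
    and distinct_root: "distinct (labels (Inner l c us))"
    and child_index_p: "child_index i us = p"
    and subtree_i: "subtree_at i (us ! p) = Inner i (Col j) ls"
    and color_bounds: "1 \<le> j" "j \<le> length ls"
begin

definition new_i_vertex :: ctree where
  "new_i_vertex = Inner i (Col (Suc p)) (us[p := ls ! (j - 1)])"

definition new_children :: "ctree list" where
  "new_children = ls[j - 1 := replace_at i new_i_vertex (us ! p)]"

lemma length_new_children: "length new_children = length ls"
  by (simp add: new_children_def)

lemma l_eq: "l = Suc i"
  using critical_root unfolding critical_def by simp

lemma labels_ge: "m \<in> set (labels (Inner l c us)) \<Longrightarrow> i \<le> m"
  using critical_root unfolding critical_def by blast

lemma p_less: "p < length us" and i_in_child: "i \<in> set (labels (us ! p))"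
proof -
  have "i \<in> set (concat (map labels us))"
    using critical_root l_eq unfolding critical_def by auto
  then show "p < length us" "i \<in> set (labels (us ! p))"
    using child_index_less[of i us] unfolding child_index_p by auto
qed

lemma child_in: "us ! p \<in> set us"
  using p_less by simp

lemma wf_child: "wf_col k (us ! p)"
  using wf_root child_in by simp

lemma distinct_child: "distinct (labels (us ! p))"
  using distinct_labels_child[OF distinct_root child_in] .

lemma i_vertex_inherits:
  "set (labels (Inner i (Col j) ls)) \<subseteq> set (labels (us ! p))"
  "distinct (labels (Inner i (Col j) ls))" "wf_col k (Inner i (Col j) ls)"
  using subtree_at_inherits[of i "us ! p" k] subtree_i distinct_child wf_child by auto

lemma i_notin_grandchildren: "t \<in> set ls \<Longrightarrow> i \<notin> set (labels t)"
  using i_vertex_inherits(2) by auto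

lemma sum_nodes_new_children:
  "add_mset (i, length ls) (\<Sum>t\<leftarrow>new_children. nodes t) = add_mset (i, length us) (\<Sum>t\<leftarrow>us. nodes t)"
proof -
  let ?T = "us ! p" and ?T' = "replace_at i new_i_vertex (us ! p)" and ?g = "ls ! (j - 1)"
  have j: "j - 1 < length ls"
    using color_bounds by simp
  have "add_mset (i, length ls) (\<Sum>t\<leftarrow>new_children. nodes t) + nodes ?g
      = nodes (Inner i (Col j) ls) + nodes ?T'"
    using sum_list_map_update[OF j, of nodes ?T'] unfolding new_children_def by (simp add: ac_simps)
  also have "\<dots> = nodes ?T + nodes new_i_vertex"
    using nodes_replace_at[OF distinct_child i_in_child, of new_i_vertex] subtree_i by (simp add: ac_simps)
  also have "\<dots> = add_mset (i, length us) (\<Sum>t\<leftarrow>us. nodes t) + nodes ?g"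
    using sum_list_map_update[OF p_less, of nodes ?g] unfolding new_i_vertex_def by (simp add: ac_simps)
  finally show ?thesis
    by simp
qed

lemma nodes_exchange:
  "nodes (Inner l c new_children) = image_mset (apfst (adj_swap i)) (nodes (Inner l c us))"
proof -
  have split: "nodes (us ! p) = nodes (replace_at i Leaf (us ! p)) + nodes (Inner i (Col j) ls)"
    using nodes_replace_at[OF distinct_child i_in_child, of Leaf] subtree_i by simp
  have "(i, length ls) \<in># nodes (us ! p)"
    unfolding split by simp
  then have "(i, length ls) \<in># (\<Sum>t\<leftarrow>us. nodes t)"
    using child_in by auto
  then obtain X where X: "(\<Sum>t\<leftarrow>us. nodes t) = add_mset (i, length ls) X"
    by (meson mset_add)
  then have new: "(\<Sum>t\<leftarrow>new_children. nodes t) = add_mset (i, length us) X"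
    using sum_nodes_new_children by (simp add: add_mset_commute)
  have root: "nodes (Inner l c us) = add_mset (Suc i, length us) (add_mset (i, length ls) X)"
    using X l_eq by simp
  have "\<forall>(x, _) \<in># X. x \<noteq> i \<and> x \<noteq> Suc i"
    using label_unique_in_nodes[OF distinct_root root]
      label_unique_in_nodes[OF distinct_root root[unfolded add_mset_commute[of "(Suc i, _)"]]]
    by auto
  then show ?thesis
    using image_mset_apfst_transpose[of X i "Suc i" "length ls" "length us"] root new l_eq
    by (simp add: add_mset_commute transpose_commute length_new_children)
qed

lemma i_in_new_child: "i \<in> set (labels (replace_at i new_i_vertex (us ! p)))"
  using i_in_child by (rule label_in_replace_at) (simp add: new_i_vertex_def)

lemma new_child_at: "new_children ! (j - 1) = replace_at i new_i_vertex (us ! p)"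
  using color_bounds by (simp add: new_children_def)

lemma new_child_in: "replace_at i new_i_vertex (us ! p) \<in> set new_children"
  using color_bounds unfolding new_children_def by (intro set_update_memI) simp

lemma exchange_eq: "exchange i l c us = Inner l c new_children"
  using exchange_unfold[OF child_index_p subtree_i] by (simp add: new_children_def new_i_vertex_def)

lemma wf_new_i_vertex: "wf_col k new_i_vertex"
proof -
  have "wf_col k (ls ! (j - 1))"
    using i_vertex_inherits(3) color_bounds by simp
  then have "\<forall>t \<in> set (us[p := ls ! (j - 1)]). wf_col k t"
    using wf_root set_update_subset_insert[of us p] by auto
  then show ?thesis
    using p_less unfolding new_i_vertex_def by auto
qed

lemma wf_exchange: "wf_col k (Inner l c new_children)"
proof -
  have "wf_col k (replace_at i new_i_vertex (us ! p))"
    by (rule wf_col_replace_at_min[OF wf_child wf_new_i_vertex i_in_child])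
      (use labels_ge child_in in \<open>auto simp: new_i_vertex_def\<close>)
  then have "\<forall>t \<in> set new_children. wf_col k t"
    using i_vertex_inherits(3) set_update_subset_insert[of ls "j - 1"]
    unfolding new_children_def by auto
  moreover have "\<not> proper_root l new_children"
    using i_in_new_child new_child_in l_eq unfolding proper_root_def by auto
  moreover have "c \<in> {SCol j | j. 1 \<le> j \<and> j \<le> k}"
    using wf_root critical_root unfolding critical_def by auto
  ultimately show ?thesis
    using color_bounds length_new_children by auto
qed

lemma critical_exchange: "critical i l c new_children"
proof -
  have labels: "set (labels (Inner l c new_children)) = adj_swap i ` set (labels (Inner l c us))"
    unfolding set_labels nodes_exchange by (simp add: image_image)
  have "i \<in> set (labels (Inner l c new_children))"
    using l_eq unfolding labels by (auto intro: image_eqI[of _ _ l])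
  moreover have "\<forall>m \<in> set (labels (Inner l c new_children)). i \<le> m"
    using labels_ge unfolding labels by (auto simp: transpose_def)
  ultimately show ?thesis
    using critical_root unfolding critical_def by blast
qed

lemma exchange_new_children: "exchange i l c new_children = Inner l c us"
proof -
  let ?g = "ls ! (j - 1)"
  have "child_index i new_children = j - 1"
    using color_bounds i_in_new_child i_notin_grandchildren
    by (intro child_index_eqI) (auto simp: new_children_def)
  moreover have "subtree_at i (new_children ! (j - 1)) = Inner i (Col (Suc p)) (us[p := ?g])"
    unfolding new_child_at new_i_vertex_def using distinct_child i_in_child by (rule subtree_at_replace_at)
  ultimately have "exchange i l c new_children = Inner l c ((us[p := ?g])[p :=
      replace_at i (Inner i (Col j) ls) (replace_at i new_i_vertex (us ! p))])"
    using exchange_unfold[of i new_children "j - 1"] p_less color_bounds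
    by (simp add: new_children_def new_child_at)
  also have "\<dots> = Inner l c us"
    using replace_at_subtree_at[OF distinct_child, of i] subtree_i
    by (simp add: new_i_vertex_def replace_at_replace_at)
  finally show ?thesis .
qed

end

lemma critical_vertexI:
  assumes "critical i l c us" and "wf_col k (Inner l c us)" and "distinct (labels (Inner l c us))"
  obtains j ls where "critical_vertex k i l c us (child_index i us) j ls"
proof -
  let ?p = "child_index i us"
  have "i \<in> set (concat (map labels us))"
    using assms(1) unfolding critical_def by auto
  then have p: "?p < length us" "i \<in> set (labels (us ! ?p))"
    by (rule child_index_less)+
  then have child: "us ! ?p \<in> set us"
    by simp
  then have "distinct (labels (us ! ?p))"
    using assms(3) by (rule distinct_labels_child[rotated])
  then obtain cu ls where subtree: "subtree_at i (us ! ?p) = Inner i cu ls"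
    using subtree_at_root_label p(2) by blast
  have "wf_col k (Inner i cu ls)" and labels: "set (labels (Inner i cu ls)) \<subseteq> set (labels (us ! ?p))"
    using subtree_at_inherits[of i "us ! ?p" k] subtree assms(2) child by auto
  moreover have "proper_root i ls"
  proof -
    have "set (labels (us ! ?p)) \<subseteq> set (labels (Inner l c us))"
      using child by auto
    then have "\<forall>m \<in> set (labels (Inner i cu ls)). i \<le> m"
      using assms(1) labels unfolding critical_def by blast
    then show ?thesis
      unfolding proper_root_def by (simp add: not_less)
  qed
  ultimately obtain j where "cu = Col j" "1 \<le> j" "j \<le> length ls"
    by auto
  with assms subtree show thesis
    by (intro that) (simp add: critical_vertex_def)
qed

lemma exchange_critical_vertex:
  assumes "critical i l c us" and "wf_col k (Inner l c us)" and "distinct (labels (Inner l c us))"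
  shows "\<exists>vs. exchange i l c us = Inner l c vs \<and> critical i l c vs \<and> wf_col k (Inner l c vs) \<and>
    nodes (Inner l c vs) = image_mset (apfst (adj_swap i)) (nodes (Inner l c us)) \<and>
    exchange i l c vs = Inner l c us"
proof -
  obtain j ls where "critical_vertex k i l c us (child_index i us) j ls"
    using assms by (rule critical_vertexI)
  then interpret critical_vertex k i l c us "child_index i us" j ls .
  show ?thesis
    using exchange_eq critical_exchange wf_exchange nodes_exchange exchange_new_children by blast
qed

section \<open>Swapping two adjacent labels\<close>

fun exchange_tree :: "nat \<Rightarrow> ctree \<Rightarrow> ctree" where
  "exchange_tree i Leaf = Leaf"
| "exchange_tree i (Inner l c ts) =
     (if critical i l c ts then exchange i l c ts else Inner l c (map (exchange_tree i) ts))"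

definition swap_tree :: "nat \<Rightarrow> ctree \<Rightarrow> ctree" where
  "swap_tree i t = (if has_critical i t then exchange_tree i t else map_label (adj_swap i) t)"

lemma has_critical_labels: "has_critical i t \<Longrightarrow> i \<in> set (labels t) \<and> Suc i \<in> set (labels t)"
  by (induction t) (auto simp: critical_def)

lemma exchange_tree_id: "\<not> has_critical i t \<Longrightarrow> exchange_tree i t = t"
  by (induction t) (auto intro: map_idI)

lemma wf_col_replace_child:
  assumes "wf_col k (Inner l c (ys @ t # zs))" and "wf_col k t'" and "set (labels t') = set (labels t)"
  shows "wf_col k (Inner l c (ys @ t' # zs))"
proof -
  have "proper_root l (ys @ t' # zs) \<longleftrightarrow> proper_root l (ys @ t # zs)"
    using assms(3) unfolding proper_root_def by simp
  with assms show ?thesis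
    by auto
qed

lemma exchange_tree_props:
  assumes "wf_col k t" and "distinct (labels t)" and "has_critical i t"
  shows "nodes (exchange_tree i t) = image_mset (apfst (adj_swap i)) (nodes t) \<and>
    wf_col k (exchange_tree i t) \<and> has_critical i (exchange_tree i t) \<and>
    exchange_tree i (exchange_tree i t) = t"
  using assms
proof (induction t)
  case (Inner l c ts)
  show ?case
  proof (cases "critical i l c ts")
    case True
    with Inner.prems obtain vs where "exchange i l c ts = Inner l c vs" "critical i l c vs"
      "wf_col k (Inner l c vs)" "nodes (Inner l c vs) = image_mset (apfst (adj_swap i)) (nodes (Inner l c ts))"
      "exchange i l c vs = Inner l c ts"
      using exchange_critical_vertex by blast
    with True show ?thesis
      by simp
  next
    case False
    with Inner.prems(3) obtain t where t: "t \<in> set ts" "has_critical i t"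
      by auto
    then have labels_t: "i \<in> set (labels t)" "Suc i \<in> set (labels t)"
      using has_critical_labels by blast+
    with t(1) Inner.prems(2) have l: "l \<noteq> i" "l \<noteq> Suc i"
      by auto
    obtain ys zs where ts: "ts = ys @ t # zs"
      using t(1) by (meson split_list)
    have others: "i \<notin> set (labels u) \<and> Suc i \<notin> set (labels u)" if "u \<in> set ys \<union> set zs" for u
      using Inner.prems(2) labels_t that unfolding ts by auto
    then have unchanged: "exchange_tree i u = u" if "u \<in> set ys \<union> set zs" for u
      using that has_critical_labels exchange_tree_id by blast
    let ?t' = "exchange_tree i t"
    have IH: "nodes ?t' = image_mset (apfst (adj_swap i)) (nodes t)" "wf_col k ?t'"
      "has_critical i ?t'" "exchange_tree i ?t' = t"
      using Inner.IH[OF t(1)] Inner.prems(1) t distinct_labels_child[OF Inner.prems(2)] by auto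
    have result: "exchange_tree i (Inner l c ts) = Inner l c (ys @ ?t' # zs)"
      using False unchanged unfolding ts by (auto intro: map_idI)
    have nodes: "nodes (Inner l c (ys @ ?t' # zs)) = image_mset (apfst (adj_swap i)) (nodes (Inner l c ts))"
      using IH(1) l others unfolding ts by (simp add: image_mset_sum_list nodes_adj_swap_id cong: map_cong)
    have "set (labels ?t') = adj_swap i ` set (labels t)"
      unfolding set_labels IH(1) by (simp add: image_image)
    also have "\<dots> = set (labels t)"
      using labels_t by (intro transpose_image_eq) auto
    finally have "wf_col k (Inner l c (ys @ ?t' # zs))"
      using wf_col_replace_child Inner.prems(1) IH(2) unfolding ts by blast
    moreover have "\<not> critical i l c (ys @ ?t' # zs)"
      using l unfolding critical_def by simp
    ultimately show ?thesis
      using result nodes IH(3,4) unchanged unfolding ts by (auto intro: map_idI)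
  qed
qed simp

lemma adj_swap_less: "m < l \<Longrightarrow> \<not> (m = i \<and> l = Suc i) \<Longrightarrow> adj_swap i m < adj_swap i l"
  by (auto simp: transpose_def)

lemma improper_map_label_adj_swap:
  assumes "\<not> proper_root l ts" and "\<not> critical i l c ts" and "is_special c"
  shows "\<not> proper_root (adj_swap i l) (map (map_label (adj_swap i)) ts)"
proof -
  let ?A = "set (labels (Inner l c ts))"
  obtain m where m: "m \<in> ?A" "m < l"
    using assms(1) proper_root_iff by blast
  have "\<exists>m \<in> ?A. m < l \<and> \<not> (m = i \<and> l = Suc i)"
  proof (cases "m = i \<and> l = Suc i")
    case True
    then obtain m' where "m' \<in> ?A" "m' < i"
      using assms(2,3) m(1) unfolding critical_def by (auto simp: not_le)
    with True show ?thesis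
      by (intro bexI[of _ m']) auto
  qed (use m in blast)
  then obtain m where "m \<in> ?A" "adj_swap i m < adj_swap i l"
    using adj_swap_less by blast
  then show ?thesis
    unfolding proper_root_iff[of _ _ c] labels_map_label_Inner by auto
qed

lemma wf_col_map_label_adj_swap:
  "wf_col k t \<Longrightarrow> \<not> has_critical i t \<Longrightarrow> wf_col k (map_label (adj_swap i) t)"
proof (induction t)
  case (Inner l c ts)
  then have "c \<in> {Col j | j. 1 \<le> j \<and> j \<le> length ts} \<or>
    (\<not> proper_root (adj_swap i l) (map (map_label (adj_swap i)) ts) \<and> c \<in> {SCol j | j. 1 \<le> j \<and> j \<le> k})"
    using improper_map_label_adj_swap[of l ts i c] by auto
  with Inner show ?case
    by auto
qed simp

lemma no_critical_map_label_adj_swap: "wf_col k t \<Longrightarrow> \<not> has_critical i (map_label (adj_swap i) t)"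
proof (induction t)
  case (Inner l c ts)
  have "\<not> critical i (adj_swap i l) c (map (map_label (adj_swap i)) ts)"
  proof
    assume critical: "critical i (adj_swap i l) c (map (map_label (adj_swap i)) ts)"
    then have "l = i"
      unfolding critical_def by (auto simp: transpose_eq_iff)
    moreover have "i \<le> m" if "m \<in> set (labels (Inner l c ts))" for m
      using critical that unfolding critical_def labels_map_label_Inner
      by (force simp: transpose_def split: if_splits)
    ultimately have "proper_root l ts"
      unfolding proper_root_iff[of _ _ c] by (auto simp: not_less)
    with Inner.prems critical show False
      unfolding critical_def by auto
  qed
  with Inner show ?case
    by auto
qed simp

lemma swap_tree_props:
  assumes "wf_col k t" and "distinct (labels t)"
  shows "nodes (swap_tree i t) = image_mset (apfst (adj_swap i)) (nodes t) \<and>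
    wf_col k (swap_tree i t) \<and> swap_tree i (swap_tree i t) = t"
proof (cases "has_critical i t")
  case True
  then show ?thesis
    using exchange_tree_props[OF assms True] unfolding swap_tree_def by simp
next
  case False
  then show ?thesis
    using wf_col_map_label_adj_swap[OF assms(1) False] no_critical_map_label_adj_swap[OF assms(1)]
    unfolding swap_tree_def by (simp add: nodes_map_label map_label_involution)
qed

section \<open>Permuting the label classes\<close>

lemma map_mem_CF_S:
  assumes F: "F \<in> CF_S r k S" and "inj \<sigma>" and \<sigma>_range: "\<sigma> ` {1..n_of r} = {1..n_of r}"
    and g: "\<And>t. t \<in> set F \<Longrightarrow> wf_col k (g t) \<and> nodes (g t) = image_mset (apfst \<sigma>) (nodes t)"
  shows "map g F \<in> CF_S r k (\<lambda>d. \<sigma> ` S d)"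
proof -
  have "mset (forest_labels (map g F)) = (\<Sum>t\<leftarrow>F. image_mset fst (nodes (g t)))"
    unfolding forest_labels_def by (simp add: mset_concat mset_labels comp_def)
  also have "\<dots> = (\<Sum>t\<leftarrow>F. image_mset \<sigma> (image_mset fst (nodes t)))"
    using g by (intro arg_cong[where f = sum_list] map_cong) (auto simp: multiset.map_comp comp_def)
  also have "\<dots> = mset (map \<sigma> (forest_labels F))"
    unfolding forest_labels_def by (simp add: mset_concat mset_labels image_mset_sum_list comp_def)
  finally have labels: "mset (forest_labels (map g F)) = mset (map \<sigma> (forest_labels F))" .
  have "distinct (map \<sigma> (forest_labels F))"
    using F \<open>inj \<sigma>\<close> unfolding CF_S_def CF_def by (auto simp: distinct_map intro: inj_on_subset)
  then have "distinct (forest_labels (map g F))"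
    using labels mset_eq_imp_distinct_iff by blast
  moreover have "set (forest_labels (map g F)) = {1..n_of r}"
    using arg_cong[OF labels, of set_mset] F \<sigma>_range unfolding CF_S_def CF_def by simp
  moreover have "(\<Sum>t\<leftarrow>map g F. degcount d t) = (\<Sum>t\<leftarrow>F. degcount d t)" for d
    using g by (auto intro!: arg_cong[where f = sum_list] degcount_cong simp: multiset.map_comp comp_def)
  moreover have "labels_in (\<lambda>d. \<sigma> ` S d) (g t)" if "t \<in> set F" for t
    using F g[OF that] that unfolding CF_S_def labels_in_iff_nodes by fastforce
  ultimately show ?thesis
    using F g unfolding CF_S_def CF_def by auto
qed

lemma swap_forest_CF_S:
  assumes "1 \<le> i" and "Suc i \<le> n_of r" and F: "F \<in> CF_S r k S"
  shows "map (swap_tree i) F \<in> CF_S r k (\<lambda>d. adj_swap i ` S d)"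
    and "map (swap_tree i) (map (swap_tree i) F) = F"
proof -
  have "wf_col k t \<and> distinct (labels t)" if "t \<in> set F" for t
    using F that distinct_labels_forest unfolding CF_S_def CF_def forest_labels_def by auto
  then have props: "nodes (swap_tree i t) = image_mset (apfst (adj_swap i)) (nodes t) \<and>
      wf_col k (swap_tree i t) \<and> swap_tree i (swap_tree i t) = t" if "t \<in> set F" for t
    using swap_tree_props that by blast
  show "map (swap_tree i) F \<in> CF_S r k (\<lambda>d. adj_swap i ` S d)"
    using F inj_transpose props assms(1,2) by (intro map_mem_CF_S) auto
  show "map (swap_tree i) (map (swap_tree i) F) = F"
    using props by (simp add: map_idI)
qed

lemma card_CF_S_adj_swap:
  assumes "1 \<le> i" and "Suc i \<le> n_of r"
  shows "card (CF_S r k (\<lambda>d. adj_swap i ` S d)) = card (CF_S r k S)"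
proof -
  have "bij_betw (map (swap_tree i)) (CF_S r k S) (CF_S r k (\<lambda>d. adj_swap i ` S d))"
    using swap_forest_CF_S[OF assms, of _ k S] swap_forest_CF_S[OF assms, of _ k "\<lambda>d. adj_swap i ` S d"]
    by (intro bij_betw_byWitness[where f' = "map (swap_tree i)"]) (auto simp: image_image)
  then show ?thesis
    by (simp add: bij_betw_same_card)
qed

lemma card_CF_S_transpose_less:
  assumes "1 \<le> a" and "a < b" and "b \<le> n_of r"
  shows "card (CF_S r k (\<lambda>d. Transposition.transpose a b ` S d)) = card (CF_S r k S)"
  using assms
proof (induction b arbitrary: S)
  case (Suc b)
  show ?case
  proof (cases "a = b")
    case False
    then have "a < b"
      using Suc.prems(2) by simp
    have "Transposition.transpose a (Suc b) = adj_swap b \<circ> Transposition.transpose a b \<circ> adj_swap b"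
      using transpose_comp_triple[of "Suc b" a b] \<open>a < b\<close> by (simp add: transpose_commute)
    then have "card (CF_S r k (\<lambda>d. Transposition.transpose a (Suc b) ` S d))
        = card (CF_S r k (\<lambda>d. adj_swap b ` Transposition.transpose a b ` adj_swap b ` S d))"
      by (simp add: image_comp)
    also have "\<dots> = card (CF_S r k S)"
      using Suc \<open>a < b\<close> card_CF_S_adj_swap[of b r k] by simp
    finally show ?thesis .
  qed (use Suc.prems card_CF_S_adj_swap in simp)
qed simp

lemma card_CF_S_transpose:
  assumes "a \<in> {1..n_of r}" and "b \<in> {1..n_of r}"
  shows "card (CF_S r k (\<lambda>d. Transposition.transpose a b ` S d)) = card (CF_S r k S)"
  using assms card_CF_S_transpose_less[of a b] card_CF_S_transpose_less[of b a]
  by (cases a b rule: linorder_cases) (auto simp: transpose_commute)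

lemma card_CF_S_permutes:
  assumes "p permutes {1..n_of r}"
  shows "card (CF_S r k (\<lambda>d. p ` S d)) = card (CF_S r k S)"
  using assms finite_atLeastAtMost
proof (induction arbitrary: S rule: permutes_induct)
  case (swap a b p)
  have "card (CF_S r k (\<lambda>d. (Transposition.transpose a b \<circ> p) ` S d))
      = card (CF_S r k (\<lambda>d. Transposition.transpose a b ` p ` S d))"
    by (simp only: image_comp)
  also have "\<dots> = card (CF_S r k S)"
    using swap card_CF_S_transpose[of a r b k] by simp
  finally show ?case .
qed simp

lemma labels_in_cong: "wf_col k t \<Longrightarrow> \<forall>d \<ge> 1. S d = S' d \<Longrightarrow> labels_in S t = labels_in S' t"
proof (induction t)
  case (Inner l c ts)
  then have "length ts \<ge> 1"
    by (cases ts) auto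
  with Inner show ?case
    by auto
qed simp

lemma CF_S_cong: "\<forall>d \<ge> 1. S d = S' d \<Longrightarrow> CF_S r k S = CF_S r k S'"
  unfolding CF_S_def CF_def using labels_in_cong by blast

lemma V_permutation:
  assumes S1: "S1 \<in> V r" and S2: "S2 \<in> V r"
  obtains p where "p permutes {1..n_of r}" and "\<forall>d \<ge> 1. S2 d = p ` S1 d"
proof -
  let ?N = "{1..n_of r}"
  have blocks1: "\<And>d. d \<ge> 1 \<Longrightarrow> S1 d \<subseteq> ?N \<and> card (S1 d) = r d"
    "\<And>d d'. d \<ge> 1 \<Longrightarrow> d' \<ge> 1 \<Longrightarrow> d \<noteq> d' \<Longrightarrow> S1 d \<inter> S1 d' = {}"
    "(\<Union>d\<in>{d. 1 \<le> d}. S1 d) = ?N"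
    using S1 unfolding V_def by auto
  have blocks2: "\<And>d. d \<ge> 1 \<Longrightarrow> S2 d \<subseteq> ?N \<and> card (S2 d) = r d"
    "(\<Union>d\<in>{d. 1 \<le> d}. S2 d) = ?N"
    using S2 unfolding V_def by auto
  have "\<exists>g. bij_betw g (S1 d) (S2 d)" if "d \<ge> 1" for d
    using blocks1(1)[OF that] blocks2(1)[OF that]
    by (intro finite_same_card_bij) (auto intro: finite_subset)
  then obtain g where g: "\<And>d. d \<ge> 1 \<Longrightarrow> bij_betw (g d) (S1 d) (S2 d)"
    by metis
  define block where "block x = (THE d. d \<ge> 1 \<and> x \<in> S1 d)" for x
  have block: "block x = d" if "d \<ge> 1" "x \<in> S1 d" for x d
    unfolding block_def using that blocks1(2) by (intro the_equality) auto
  define p where "p x = (if x \<in> ?N then g (block x) x else x)" for x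
  have p_blocks: "p ` S1 d = S2 d" if "d \<ge> 1" for d
  proof -
    have "p ` S1 d = g d ` S1 d"
      using blocks1(1)[OF that] block[OF that] unfolding p_def by (intro image_cong) auto
    then show ?thesis
      using g[OF that] by (simp add: bij_betw_def)
  qed
  have "p ` ?N = (\<Union>d\<in>{d. 1 \<le> d}. p ` S1 d)"
    unfolding blocks1(3)[symmetric] by (simp add: image_UN)
  also have "\<dots> = ?N"
    using p_blocks blocks2(2) by simp
  finally have "p ` ?N = ?N" .
  then have "bij_betw p ?N ?N"
    unfolding bij_betw_def by (simp add: finite_surj_inj)
  then have "p permutes ?N"
    by (rule bij_imp_permutes) (auto simp: p_def)
  with p_blocks show thesis
    using that by simp
qed

theorem lemma3p4:
  fixes r :: "nat \<Rightarrow> nat" and k :: nat and S1 S2 :: "nat \<Rightarrow> nat set"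
  assumes "finite {i. r i \<noteq> 0}"
    and "S1 \<in> V r" and "S2 \<in> V r"
  shows "card (CF_S r k S1) = card (CF_S r k S2)"
proof -
  obtain p where p: "p permutes {1..n_of r}" and S2: "\<forall>d \<ge> 1. S2 d = p ` S1 d"
    using assms(2,3) by (rule V_permutation)
  have "CF_S r k S2 = CF_S r k (\<lambda>d. p ` S1 d)"
    using S2 by (intro CF_S_cong) simp
  then show ?thesis
    using card_CF_S_permutes[OF p] by simp
qed

end
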